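(* Let $m,n>0$, let $f$ and $g$ be concave positive real functions on $[0,m]$ and $[0,n]$ respectively, and let $A=\{(x,y): 0\le x\le m,\ 0\le y\le f(x)\}$ and $B=\{(x,y): 0\le x\le n,\ 0\le y\le g(x)\}$. Let $k\ge1$, let $0=x_0<x_1<\cdots<x_k=m$ and $0=x'_0<x'_1<\cdots<x'_k=n$ be the partitions of $[0,m]$ and $[0,n]$ into $k$ equal parts, and for $i=1,\dots,k$ let $$A_i=\{(x,y): x_{i-1}\le x\le x_i,\ 0\le y\le f(x)\},\qquad B_i=\{(x,y): x'_{i-1}\le x\le x'_i,\ 0\le y\le g(x)\}.$$ If $|A+B|=\left(\frac{|A|}{m}+\frac{|B|}{n}\right)(m+n)$, then for every $i=1,\dots,k$, $$|A_i+B_i|=\left(\frac{|A_i|}{m/k}+\frac{|B_i|}{n/k}\right)\left(\frac{m}{k}+\frac{n}{k}\right).$$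
   Context: $|X|$ denotes area; $A+B$ is the Minkowski sum. *)

theory Defs
  imports "HOL-Analysis.Analysis"
begin

definition minksum :: "(real \<times> real) set \<Rightarrow> (real \<times> real) set \<Rightarrow> (real \<times> real) set" where
  "minksum A B = {a + b | a b. a \<in> A \<and> b \<in> B}"

definition area :: "(real \<times> real) set \<Rightarrow> real" where
  "area S = measure lebesgue S"

definition hypo :: "(real \<Rightarrow> real) \<Rightarrow> real \<Rightarrow> real \<Rightarrow> (real \<times> real) set" where
  "hypo f a b = {(x, y). a \<le> x \<and> x \<le> b \<and> 0 \<le> y \<and> y \<le> f x}"

end

theory Submission
  imports Defs
begin

text \<open>
  For concave \<open>f \<ge> 0\<close> on \<open>[a,b]\<close> and \<open>g \<ge> 0\<close> on \<open>[c,d]\<close>, reparametrise both functions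
  affinely over the common interval \<open>[a+c, b+d]\<close> and add them: the hypograph of the sum
  lies in \<open>A + B\<close> (split each point at abscissae that add up correctly) and its area is
  \<open>(|A|/(b-a) + |B|/(d-c))((b-a)+(d-c))\<close>. Hence \<open>|A_i + B_i|\<close> is at least the right-hand
  side of the claim for every strip. The sets \<open>A_i + B_i\<close> lie in vertical strips of
  \<open>A + B\<close> meeting only along lines, and since all strips have the same widths the
  right-hand sides add up to the right-hand side for \<open>A + B\<close>. Equality for \<open>A + B\<close>
  therefore forces equality in every strip.
\<close>

lemma concave_on_subset: "\<lbrakk>concave_on T f; S \<subseteq> T; convex S\<rbrakk> \<Longrightarrow> concave_on S f"
  unfolding concave_on_def by (rule convex_on_subset)

lemma affine_reparam_mem:
  fixes \<beta> :: real
  assumes "0 \<le> \<beta>" "a + (q - p) * \<beta> \<le> b" "z \<in> {p..q}"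
  shows "a + (z - p) * \<beta> \<in> {a..b}"
  using assms by (auto intro!: order.trans[OF _ assms(2)] mult_right_mono)

lemma concave_on_affine_reparam:
  fixes f :: "real \<Rightarrow> real"
  assumes "concave_on {a..b} f" "\<beta> > 0" "a + (q - p) * \<beta> \<le> b"
  shows "concave_on {p..q} (\<lambda>z. f (a + (z - p) * \<beta>))"
  unfolding concave_on_iff
proof (intro conjI ballI allI impI)
  show "convex {p..q}" by simp
  fix x y u v :: real
  assume xy: "x \<in> {p..q}" "y \<in> {p..q}" and uv: "0 \<le> u" "0 \<le> v" "u + v = 1"
  have v: "v = 1 - u" using uv by simp
  have eq: "a + (u *\<^sub>R x + v *\<^sub>R y - p) * \<beta>
            = u *\<^sub>R (a + (x - p) * \<beta>) + v *\<^sub>R (a + (y - p) * \<beta>)"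
    unfolding v by (simp add: algebra_simps)
  show "u * f (a + (x - p) * \<beta>) + v * f (a + (y - p) * \<beta>)
        \<le> f (a + (u *\<^sub>R x + v *\<^sub>R y - p) * \<beta>)"
    unfolding eq using assms(1) affine_reparam_mem[OF _ assms(3)] assms(2) xy uv
    unfolding concave_on_iff by (meson less_imp_le)
qed

lemma has_integral_affine_reparam:
  fixes f :: "real \<Rightarrow> real"
  assumes "(f has_integral I) {a..b}" "\<beta> > 0"
  shows "((\<lambda>z. f (a + (z - p) * \<beta>)) has_integral I / \<beta>) {p .. p + (b - a) / \<beta>}"
proof -
  have "((\<lambda>x. f (\<beta> *\<^sub>R x + (a - p * \<beta>))) has_integral (I /\<^sub>R \<beta> ^ DIM(real)))
          (cbox ((a - (a - p * \<beta>)) /\<^sub>R \<beta>) ((b - (a - p * \<beta>)) /\<^sub>R \<beta>))"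
    using assms by (intro has_integral_affinity') auto
  moreover have "cbox ((a - (a - p * \<beta>)) /\<^sub>R \<beta>) ((b - (a - p * \<beta>)) /\<^sub>R \<beta>) = {p .. p + (b - a) / \<beta>}"
    using assms(2) by (simp add: field_simps)
  moreover have "(\<lambda>x. f (\<beta> *\<^sub>R x + (a - p * \<beta>))) = (\<lambda>z. f (a + (z - p) * \<beta>))"
    by (auto simp: fun_eq_iff algebra_simps)
  moreover have "I /\<^sub>R \<beta> ^ DIM(real) = I / \<beta>" by (simp add: divide_inverse)
  ultimately show ?thesis by (simp only:)
qed

lemma borel_measurable_indicator_mult_concave:
  fixes h :: "real \<Rightarrow> real"
  assumes "p < q" "concave_on {p..q} h"
  shows "(\<lambda>x. indicator {p..q} x * h x) \<in> borel_measurable borel"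
proof -
  have "convex_on {p<..<q} (\<lambda>x. - h x)"
    using assms(2) unfolding concave_on_def by (rule convex_on_subset) auto
  then have "continuous_on {p<..<q} (\<lambda>x. - h x)" by (intro convex_on_continuous) auto
  then have "continuous_on {p<..<q} h"
    using continuous_on_minus[of "{p<..<q}" "\<lambda>x. - h x"] by simp
  then have [measurable]: "(\<lambda>x. indicator {p<..<q} x *\<^sub>R h x) \<in> borel_measurable borel"
    by (rule borel_measurable_continuous_on_indicator[rotated]) auto
  \<comment> \<open>a concave function may jump at the endpoints, so treat them separately\<close>
  have "(\<lambda>x. indicator {p..q} x * h x) =
     (\<lambda>x. indicator {p<..<q} x *\<^sub>R h x + indicator {p} x * h p + indicator {q} x * h q)"
    using assms(1) by (auto simp: fun_eq_iff indicator_def)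
  then show ?thesis by (simp only:) measurable
qed

lemma concave_pos_le_twice_midpoint:
  fixes h :: "real \<Rightarrow> real"
  assumes "concave_on {p..q} h" "\<forall>x\<in>{p..q}. h x > 0" "x \<in> {p..q}"
  shows "h x \<le> 2 * h ((p + q) / 2)"
proof -
  have y: "p + q - x \<in> {p..q}" using assms(3) by auto
  have "(1 - 1/2) * h x + (1/2) * h (p + q - x) \<le> h ((1 - 1/2) *\<^sub>R x + (1/2) *\<^sub>R (p + q - x))"
    using concave_onD[OF assms(1), of "1/2" x "p + q - x"] assms(3) y by simp
  moreover have "(1 - 1/2) *\<^sub>R x + (1/2) *\<^sub>R (p + q - x) = (p + q) / 2" by (simp add: field_simps)
  moreover have "h (p + q - x) > 0" using assms(2) y by auto
  ultimately show ?thesis by (simp add: field_simps)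
qed

lemma convex_hypo:
  assumes "concave_on {p..q} h"
  shows "convex (hypo h p q)"
  unfolding convex_alt
proof (intro ballI allI impI)
  fix z w :: "real \<times> real" and u :: real
  assume "z \<in> hypo h p q" "w \<in> hypo h p q" and u: "0 \<le> u \<and> u \<le> 1"
  then obtain x1 y1 x2 y2 where z: "z = (x1, y1)" "p \<le> x1" "x1 \<le> q" "0 \<le> y1" "y1 \<le> h x1"
    and w: "w = (x2, y2)" "p \<le> x2" "x2 \<le> q" "0 \<le> y2" "y2 \<le> h x2"
    by (auto simp: hypo_def)
  have "(1 - u) * y1 + u * y2 \<le> (1 - u) * h x1 + u * h x2"
    using u z w by (intro add_mono mult_left_mono) auto
  also have "\<dots> \<le> h ((1 - u) *\<^sub>R x1 + u *\<^sub>R x2)"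
    using assms z w u unfolding concave_on_iff by auto
  finally have "(1 - u) * y1 + u * y2 \<le> h ((1 - u) * x1 + u * x2)" by simp
  moreover have "p \<le> (1 - u) * x1 + u * x2" "(1 - u) * x1 + u * x2 \<le> q"
    using u z w convex_bound_le[of x1 q x2 "1 - u" u] convex_bound_le[of "-x1" "-p" "-x2" "1 - u" u]
    by (auto simp: algebra_simps)
  moreover have "0 \<le> (1 - u) * y1 + u * y2" using u z w by auto
  ultimately show "(1 - u) *\<^sub>R z + u *\<^sub>R w \<in> hypo h p q"
    using z w by (auto simp: hypo_def)
qed

lemma bounded_hypo_concave:
  assumes "concave_on {p..q} h" "\<forall>x\<in>{p..q}. h x > 0"
  shows "bounded (hypo h p q)"
proof -
  have "hypo h p q \<subseteq> cbox (p, 0) (q, 2 * h ((p + q) / 2))"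
    using concave_pos_le_twice_midpoint[OF assms]
    by (fastforce simp: hypo_def cbox_Pair_iff intro: order.trans)
  then show ?thesis using bounded_cbox bounded_subset by blast
qed

lemma minksum_hypo_concave_lmeasurable:
  assumes "concave_on {a..b} f" "\<forall>x\<in>{a..b}. f x > 0"
    and "concave_on {c..d} g" "\<forall>x\<in>{c..d}. g x > 0"
  shows "minksum (hypo f a b) (hypo g c d) \<in> lmeasurable"
proof -
  have eq: "minksum (hypo f a b) (hypo g c d) = (\<Union>x\<in>hypo f a b. \<Union>y\<in>hypo g c d. {x + y})"
    unfolding minksum_def by blast
  show ?thesis unfolding eq
    by (intro measurable_convex convex_sums bounded_sums convex_hypo bounded_hypo_concave assms)
qed

lemma hypo_sets_borel:
  assumes [measurable]: "(\<lambda>x. indicator {p..q} x * h x) \<in> borel_measurable borel"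
  shows "hypo h p q \<in> sets (borel :: (real \<times> real) measure)"
proof -
  let ?H = "\<lambda>x. indicator {p..q} x * h x"
  have "hypo h p q
        = {z \<in> space (borel \<Otimes>\<^sub>M borel). fst z \<in> {p..q} \<and> 0 \<le> snd z \<and> snd z \<le> ?H (fst z)}"
    by (auto simp: hypo_def space_pair_measure)
  also have "\<dots> \<in> sets (borel \<Otimes>\<^sub>M borel)" by measurable
  finally show ?thesis by (subst (asm) borel_prod)
qed

lemma emeasure_hypo_eq_nn_integral:
  assumes meas: "(\<lambda>x. indicator {p..q} x * h x) \<in> borel_measurable borel"
    and nonneg: "\<And>x. x \<in> {p..q} \<Longrightarrow> 0 \<le> h x"
  shows "emeasure lborel (hypo h p q) = (\<integral>\<^sup>+x. ennreal (indicator {p..q} x * h x) \<partial>lborel)"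
proof -
  have "emeasure (lborel \<Otimes>\<^sub>M lborel) (hypo h p q)
        = (\<integral>\<^sup>+x. emeasure lborel (Pair x -` hypo h p q) \<partial>lborel)"
    by (rule lborel.emeasure_pair_measure_alt) (unfold lborel_prod, use hypo_sets_borel[OF meas] in simp)
  also have "\<dots> = (\<integral>\<^sup>+x. ennreal (indicator {p..q} x * h x) \<partial>lborel)"
  proof (rule nn_integral_cong)
    fix x :: real
    have "Pair x -` hypo h p q = (if x \<in> {p..q} then {0..h x} else {})"
      by (auto simp: hypo_def)
    then show "emeasure lborel (Pair x -` hypo h p q) = ennreal (indicator {p..q} x * h x)"
      using nonneg by (simp add: indicator_def)
  qed
  finally show ?thesis by (simp add: lborel_prod)
qed

lemma has_integral_area_hypo:
  fixes h :: "real \<Rightarrow> real"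
  assumes meas [measurable]: "(\<lambda>x. indicator {p..q} x * h x) \<in> borel_measurable borel"
    and bnd: "\<And>x. x \<in> {p..q} \<Longrightarrow> 0 \<le> h x \<and> h x \<le> C"
  shows "(h has_integral area (hypo h p q)) {p..q}"
proof -
  let ?H = "\<lambda>x. indicator {p..q} x * h x"
  have "integrable lborel ?H"
  proof (rule Bochner_Integration.integrable_bound)
    show "integrable lborel (\<lambda>x. C * indicator {p..q} x :: real)"
      by (intro integrable_mult_right integrable_real_indicator) (auto simp: emeasure_lborel_Icc_eq)
    show "AE x in lborel. norm (?H x) \<le> norm (C * indicator {p..q} x :: real)"
      using bnd by (fastforce simp: indicator_def)
  qed simp
  moreover have "0 \<le> integral\<^sup>L lborel ?H"
    by (rule integral_nonneg_AE) (use bnd in \<open>auto simp: indicator_def\<close>)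
  moreover have "emeasure lborel (hypo h p q) = ennreal (integral\<^sup>L lborel ?H)"
    using emeasure_hypo_eq_nn_integral[OF meas] bnd \<open>integrable lborel ?H\<close>
    by (simp add: nn_integral_eq_integral indicator_def)
  ultimately have "area (hypo h p q) = integral\<^sup>L lborel ?H"
    "(?H has_integral integral\<^sup>L lborel ?H) UNIV"
    using hypo_sets_borel[OF meas]
    by (auto simp: area_def measure_def intro: has_integral_integral_lborel)
  moreover have "?H = (\<lambda>x. if x \<in> {p..q} then h x else 0)"
    by (auto simp: indicator_def fun_eq_iff)
  ultimately show ?thesis using has_integral_restrict_UNIV[of "{p..q}" h] by metis
qed

lemma has_integral_area_hypo_concave:
  assumes "p < q" "concave_on {p..q} h" "\<forall>x\<in>{p..q}. h x > 0"
  shows "(h has_integral area (hypo h p q)) {p..q}"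
  using concave_pos_le_twice_midpoint[OF assms(2,3)] assms(3)
  by (intro has_integral_area_hypo[OF borel_measurable_indicator_mult_concave[OF assms(1,2)]])
     (auto intro: less_imp_le)

text \<open>Split the height \<open>y \<le> f (\<phi> z) + g (\<psi> z)\<close> as \<open>min y (f (\<phi> z))\<close> plus the rest.\<close>

lemma hypo_sum_subset_minksum:
  assumes "\<forall>x\<in>{a..b}. 0 \<le> f x" "\<forall>x\<in>{c..d}. 0 \<le> g x"
    and "\<And>z. z \<in> {p..q} \<Longrightarrow> \<phi> z \<in> {a..b} \<and> \<psi> z \<in> {c..d} \<and> \<phi> z + \<psi> z = z"
  shows "hypo (\<lambda>z. f (\<phi> z) + g (\<psi> z)) p q \<subseteq> minksum (hypo f a b) (hypo g c d)"
proof
  fix w assume "w \<in> hypo (\<lambda>z. f (\<phi> z) + g (\<psi> z)) p q"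
  then obtain z y where w: "w = (z, y)" "z \<in> {p..q}" "0 \<le> y" "y \<le> f (\<phi> z) + g (\<psi> z)"
    by (auto simp: hypo_def)
  define y1 where "y1 = min y (f (\<phi> z))"
  have "0 \<le> f (\<phi> z)" "0 \<le> g (\<psi> z)" using assms w(2) by auto
  then have "(\<phi> z, y1) \<in> hypo f a b" "(\<psi> z, y - y1) \<in> hypo g c d"
    using assms(3)[OF w(2)] w by (auto simp: hypo_def y1_def min_def)
  moreover have "w = (\<phi> z, y1) + (\<psi> z, y - y1)"
    using assms(3)[OF w(2)] w(1) by simp
  ultimately show "w \<in> minksum (hypo f a b) (hypo g c d)"
    unfolding minksum_def by blast
qed

lemma area_minksum_hypo_ge_reparam:
  assumes "a < b" "c < d"
    and cf: "concave_on {a..b} f" and pf: "\<forall>x\<in>{a..b}. f x > 0"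
    and cg: "concave_on {c..d} g" and pg: "\<forall>x\<in>{c..d}. g x > 0"
    and \<beta>: "\<beta> > 0" and \<gamma>: "\<gamma> > 0"
    and qb: "(b + d - (a + c)) * \<beta> = b - a" and qd: "(b + d - (a + c)) * \<gamma> = d - c"
  shows "area (hypo f a b) / \<beta> + area (hypo g c d) / \<gamma> \<le> area (minksum (hypo f a b) (hypo g c d))"
proof -
  define p where "p = a + c"
  define q where "q = b + d"
  define h where "h z = f (a + (z - p) * \<beta>) + g (c + (z - p) * \<gamma>)" for z
  have pq: "p < q" using assms(1,2) by (simp add: p_def q_def)
  have ends: "a + (q - p) * \<beta> = b" "c + (q - p) * \<gamma> = d" "p + (b - a) / \<beta> = q" "p + (d - c) / \<gamma> = q"
    using qb qd \<beta> \<gamma> by (auto simp: p_def q_def field_simps)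
  have "(q - p) * (\<beta> + \<gamma>) = (q - p) * 1"
    using qb qd by (simp add: p_def q_def distrib_left)
  then have "\<beta> + \<gamma> = 1" using pq by simp
  then have "(z - p) * \<beta> + (z - p) * \<gamma> = z - p" for z
    by (metis distrib_left mult.right_neutral)
  then have range: "a + (z - p) * \<beta> \<in> {a..b} \<and> c + (z - p) * \<gamma> \<in> {c..d}
               \<and> (a + (z - p) * \<beta>) + (c + (z - p) * \<gamma>) = z" if "z \<in> {p..q}" for z
    using affine_reparam_mem[OF less_imp_le[OF \<beta>] eq_refl[OF ends(1)] that]
      affine_reparam_mem[OF less_imp_le[OF \<gamma>] eq_refl[OF ends(2)] that]
    unfolding p_def by (smt (verit))
  have ch: "concave_on {p..q} h"
    unfolding h_def using ends
    by (intro concave_on_add concave_on_affine_reparam[OF cf \<beta>] concave_on_affine_reparam[OF cg \<gamma>]) auto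
  have ph: "\<forall>z\<in>{p..q}. h z > 0"
    using range pf pg by (auto simp: h_def intro!: add_pos_pos)
  have "(h has_integral area (hypo f a b) / \<beta> + area (hypo g c d) / \<gamma>) {p..q}"
    unfolding h_def
    using has_integral_affine_reparam[OF has_integral_area_hypo_concave[OF assms(1) cf pf] \<beta>, of p]
      has_integral_affine_reparam[OF has_integral_area_hypo_concave[OF assms(2) cg pg] \<gamma>, of p]
    by (intro has_integral_add) (simp_all only: ends)
  then have "area (hypo f a b) / \<beta> + area (hypo g c d) / \<gamma> = area (hypo h p q)"
    using has_integral_unique[OF has_integral_area_hypo_concave[OF pq ch ph]] by simp
  also have "\<dots> \<le> area (minksum (hypo f a b) (hypo g c d))"
    unfolding area_def
  proof (rule measure_mono_fmeasurable)
    show "hypo h p q \<subseteq> minksum (hypo f a b) (hypo g c d)"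
      unfolding h_def using pf pg range
      by (intro hypo_sum_subset_minksum) (auto intro: less_imp_le)
    show "hypo h p q \<in> sets lebesgue"
      using hypo_sets_borel[OF borel_measurable_indicator_mult_concave[OF pq ch]] by simp
    show "minksum (hypo f a b) (hypo g c d) \<in> lmeasurable"
      by (rule minksum_hypo_concave_lmeasurable[OF cf pf cg pg])
  qed
  finally show ?thesis .
qed

lemma area_minksum_hypo_ge:
  assumes "a < b" "c < d"
    and "concave_on {a..b} f" "\<forall>x\<in>{a..b}. f x > 0"
    and "concave_on {c..d} g" "\<forall>x\<in>{c..d}. g x > 0"
  shows "(area (hypo f a b) / (b - a) + area (hypo g c d) / (d - c)) * ((b - a) + (d - c))
         \<le> area (minksum (hypo f a b) (hypo g c d))"
proof -
  define T where "T = (b - a) + (d - c)"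
  have T: "T > 0" and Tq: "b + d - (a + c) = T" using assms(1,2) by (simp_all add: T_def)
  have "area (hypo f a b) / ((b - a) / T) + area (hypo g c d) / ((d - c) / T)
        \<le> area (minksum (hypo f a b) (hypo g c d))"
    using assms T by (intro area_minksum_hypo_ge_reparam) (simp_all add: Tq)
  then show ?thesis
    using T by (simp add: T_def field_simps)
qed

lemma sum_integral_consecutive:
  fixes f :: "real \<Rightarrow> real" and t :: "nat \<Rightarrow> real"
  assumes "mono t" "f integrable_on {t 0 .. t k}"
  shows "(\<Sum>i\<in>{1..k}. integral {t (i - 1) .. t i} f) = integral {t 0 .. t k} f"
  using assms(2)
proof (induction k)
  case 0
  then show ?case by simp
next
  case (Suc k)
  have le: "t 0 \<le> t k" "t k \<le> t (Suc k)" using assms(1) by (auto intro: monoD)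
  have "f integrable_on {t 0 .. t k}"
    by (rule integrable_on_subinterval[OF Suc.prems]) (use le in auto)
  then have "(\<Sum>i\<in>{1..Suc k}. integral {t (i - 1) .. t i} f)
             = integral {t 0 .. t k} f + integral {t k .. t (Suc k)} f"
    using Suc.IH by (simp add: sum.atLeast1_atMost_eq)
  also have "\<dots> = integral {t 0 .. t (Suc k)} f"
    using le Suc.prems by (rule Henstock_Kurzweil_Integration.integral_combine)
  finally show ?case .
qed

lemma uniform_partition_bounds:
  fixes m :: real
  assumes "0 < m" "i \<in> {1..k}"
  shows "0 \<le> (real i - 1) * m / real k" "(real i - 1) * m / real k < real i * m / real k"
    "real i * m / real k \<le> m"
  using assms by (auto simp: divide_simps intro: mult_right_mono)

lemma uniform_partition_width:
  "real i * m / real k - (real i - 1) * m / real k = m / real k"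
  by (simp add: diff_divide_distrib[symmetric] algebra_simps)

lemma concave_pos_uniform_strip:
  assumes "0 < m" "i \<in> {1..k}" "concave_on {0..m} f" "\<forall>x\<in>{0..m}. f x > 0"
  shows "concave_on {(real i - 1) * m / real k .. real i * m / real k} f"
    "\<forall>x\<in>{(real i - 1) * m / real k .. real i * m / real k}. f x > 0"
proof -
  have "{(real i - 1) * m / real k .. real i * m / real k} \<subseteq> {0..m}"
    using uniform_partition_bounds[OF assms(1,2)] by auto
  then show "concave_on {(real i - 1) * m / real k .. real i * m / real k} f"
    "\<forall>x\<in>{(real i - 1) * m / real k .. real i * m / real k}. f x > 0"
    using assms(3,4) by (auto intro: concave_on_subset)
qed

lemma sum_area_hypo_uniform_partition:
  assumes "0 < m" "k \<ge> 1" "concave_on {0..m} f" "\<forall>x\<in>{0..m}. f x > 0"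
  shows "(\<Sum>i\<in>{1..k}. area (hypo f ((real i - 1) * m / real k) (real i * m / real k)))
         = area (hypo f 0 m)"
proof -
  define t where "t i = real i * m / real k" for i
  have whole: "(f has_integral area (hypo f 0 m)) {0..m}"
    using has_integral_area_hypo_concave assms by blast
  have "(\<Sum>i\<in>{1..k}. area (hypo f ((real i - 1) * m / real k) (real i * m / real k)))
        = (\<Sum>i\<in>{1..k}. integral {t (i - 1) .. t i} f)"
  proof (rule sum.cong)
    fix i assume i: "i \<in> {1..k}"
    have "real (i - 1) = real i - 1" using i by auto
    then show "area (hypo f ((real i - 1) * m / real k) (real i * m / real k))
               = integral {t (i - 1) .. t i} f"
      using has_integral_area_hypo_concave[OF uniform_partition_bounds(2)[OF assms(1) i]
          concave_pos_uniform_strip[OF assms(1) i assms(3,4)]]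
      by (simp add: t_def integral_unique)
  qed simp
  also have "\<dots> = integral {t 0 .. t k} f"
  proof (rule sum_integral_consecutive)
    show "mono t" using assms(1) by (auto intro!: monoI divide_right_mono mult_right_mono simp: t_def)
    show "f integrable_on {t 0 .. t k}" using whole assms(2) by (auto simp: t_def)
  qed
  also have "\<dots> = area (hypo f 0 m)"
    using whole assms(2) by (simp add: t_def integral_unique)
  finally show ?thesis .
qed

lemma sum_area_minksum_uniform_partition_le:
  assumes "0 < m" "0 < n" "k \<ge> 1"
    and cf: "concave_on {0..m} f" and pf: "\<forall>x\<in>{0..m}. f x > 0"
    and cg: "concave_on {0..n} g" and pg: "\<forall>x\<in>{0..n}. g x > 0"
  shows "(\<Sum>i\<in>{1..k}. area (minksum (hypo f ((real i - 1) * m / real k) (real i * m / real k))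
                                     (hypo g ((real i - 1) * n / real k) (real i * n / real k))))
         \<le> area (minksum (hypo f 0 m) (hypo g 0 n))"
proof -
  define P where "P i = minksum (hypo f ((real i - 1) * m / real k) (real i * m / real k))
                                (hypo g ((real i - 1) * n / real k) (real i * n / real k))" for i
  have P_strip: "P i \<subseteq> {z. (real i - 1) * m / real k + (real i - 1) * n / real k \<le> fst z
                               \<and> fst z \<le> real i * m / real k + real i * n / real k}" for i
    by (auto simp: P_def minksum_def hypo_def)
  have P_meas: "P i \<in> lmeasurable" if "i \<in> {1..k}" for i
    unfolding P_def using concave_pos_uniform_strip[OF assms(1) that cf pf]
      concave_pos_uniform_strip[OF assms(2) that cg pg]
    by (intro minksum_hypo_concave_lmeasurable) auto
  have "P i \<subseteq> minksum (hypo f 0 m) (hypo g 0 n)" if "i \<in> {1..k}" for i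
    using uniform_partition_bounds[OF assms(1) that] uniform_partition_bounds[OF assms(2) that]
    unfolding P_def minksum_def hypo_def by fastforce
  then have P_sub: "(\<Union>i\<in>{1..k}. P i) \<subseteq> minksum (hypo f 0 m) (hypo g 0 n)" by blast
  have "negligible (P i \<inter> P j)" if "i < j" for i j
  proof (rule negligible_subset)
    show "negligible {z. (1::real, 0::real) \<bullet> z = real i * m / real k + real i * n / real k}"
      by (rule negligible_hyperplane) (simp add: zero_prod_def)
    have "real i * m / real k \<le> (real j - 1) * m / real k" "real i * n / real k \<le> (real j - 1) * n / real k"
      using that assms(1,2) by (auto intro!: divide_right_mono mult_right_mono)
    then show "P i \<inter> P j \<subseteq> {z. (1::real, 0::real) \<bullet> z = real i * m / real k + real i * n / real k}"
      using P_strip[of i] P_strip[of j] by fastforce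
  qed
  then have "pairwise (\<lambda>i j. negligible (P i \<inter> P j)) {1..k}"
    unfolding pairwise_def by (metis Int_commute linorder_neqE_nat)
  then have "(\<Sum>i\<in>{1..k}. area (P i)) = measure lebesgue (\<Union>i\<in>{1..k}. P i)"
    unfolding area_def using P_meas by (intro measure_negligible_finite_Union_image[symmetric]) auto
  also have "\<dots> \<le> area (minksum (hypo f 0 m) (hypo g 0 n))"
    unfolding area_def
    using P_meas minksum_hypo_concave_lmeasurable[OF cf pf cg pg]
    by (intro measure_mono_fmeasurable[OF P_sub]) auto
  finally show ?thesis by (simp add: P_def)
qed

lemma sum_bound_uniform_partition:
  assumes "0 < m" "0 < n" "k \<ge> 1"
    and "concave_on {0..m} f" "\<forall>x\<in>{0..m}. f x > 0"
    and "concave_on {0..n} g" "\<forall>x\<in>{0..n}. g x > 0"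
  shows "(\<Sum>i\<in>{1..k}.
           (area (hypo f ((real i - 1) * m / real k) (real i * m / real k)) / (m / real k)
            + area (hypo g ((real i - 1) * n / real k) (real i * n / real k)) / (n / real k))
           * (m / real k + n / real k))
         = (area (hypo f 0 m) / m + area (hypo g 0 n) / n) * (m + n)"
proof -
  let ?A = "\<lambda>i. area (hypo f ((real i - 1) * m / real k) (real i * m / real k))"
  let ?B = "\<lambda>i. area (hypo g ((real i - 1) * n / real k) (real i * n / real k))"
  have "(\<Sum>i\<in>{1..k}. (?A i / (m / real k) + ?B i / (n / real k)) * (m / real k + n / real k))
        = ((\<Sum>i\<in>{1..k}. ?A i) / (m / real k) + (\<Sum>i\<in>{1..k}. ?B i) / (n / real k))
          * (m / real k + n / real k)"
    by (simp only: sum_divide_distrib sum.distrib[symmetric] sum_distrib_right)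
  also have "\<dots> = (area (hypo f 0 m) / m + area (hypo g 0 n) / n) * (m + n)"
    using assms(1-3)
    unfolding sum_area_hypo_uniform_partition[OF assms(1,3,4,5)]
      sum_area_hypo_uniform_partition[OF assms(2,3,6,7)]
    by (simp add: field_simps)
  finally show ?thesis .
qed

theorem lemma4p6:
  fixes m n :: real and f g :: "real \<Rightarrow> real" and k :: nat
  assumes "m > 0" and "n > 0"
    and "concave_on {0..m} f" and "\<forall>x\<in>{0..m}. f x > 0"
    and "concave_on {0..n} g" and "\<forall>x\<in>{0..n}. g x > 0"
    and "k \<ge> 1"
    and "area (minksum (hypo f 0 m) (hypo g 0 n))
         = (area (hypo f 0 m) / m + area (hypo g 0 n) / n) * (m + n)"
  shows "\<forall>i\<in>{1..k}.
    area (minksum (hypo f ((real i - 1) * m / real k) (real i * m / real k))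
                  (hypo g ((real i - 1) * n / real k) (real i * n / real k)))
    = (area (hypo f ((real i - 1) * m / real k) (real i * m / real k)) / (m / real k)
       + area (hypo g ((real i - 1) * n / real k) (real i * n / real k)) / (n / real k))
      * (m / real k + n / real k)"
proof -
  define A where "A i = hypo f ((real i - 1) * m / real k) (real i * m / real k)" for i
  define B where "B i = hypo g ((real i - 1) * n / real k) (real i * n / real k)" for i
  define R where "R i = (area (A i) / (m / real k) + area (B i) / (n / real k)) * (m / real k + n / real k)" for i
  have R_le: "R i \<le> area (minksum (A i) (B i))" if "i \<in> {1..k}" for i
    using area_minksum_hypo_ge[OF uniform_partition_bounds(2)[OF assms(1) that]
        uniform_partition_bounds(2)[OF assms(2) that]
        concave_pos_uniform_strip[OF assms(1) that assms(3,4)]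
        concave_pos_uniform_strip[OF assms(2) that assms(5,6)]]
    by (simp add: A_def B_def R_def uniform_partition_width)
  have "(\<Sum>i\<in>{1..k}. R i) = (area (hypo f 0 m) / m + area (hypo g 0 n) / n) * (m + n)"
    unfolding R_def A_def B_def by (rule sum_bound_uniform_partition[OF assms(1,2,7,3-6)])
  also have "\<dots> \<ge> (\<Sum>i\<in>{1..k}. area (minksum (A i) (B i)))"
    using sum_area_minksum_uniform_partition_le[OF assms(1,2,7,3-6)] assms(8)
    by (simp add: A_def B_def)
  finally show ?thesis
    using R_le sum_strict_mono_ex1[of "{1..k}" R "\<lambda>i. area (minksum (A i) (B i))"]
    by (force simp: A_def B_def R_def)
qed

end
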